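(* Let $(\mathcal{C},\psi)$ be a t-pair and $j\in\{1,\dots,7\}$. Then $\operatorname{typ}_u(\mathcal{C},\psi)=t_j$ if and only if $\operatorname{typ}(\mathcal{C},\psi)=T_j$.
   Context: Let $\mathbb{N}=\{0,1,2,\dots\}$; for an integer $k\ge 2$ let $E_k=\{0,1,\dots,k-1\}$; let $\mathcal{P}(\mathbb{N})$ be the set of nonempty finite subsets of $\mathbb{N}$. Let $F$ be a nonempty set (of attribute names). A decision table $T\in\mathcal{M}_k(F)$ is a rectangular table with $n\ge 1$ columns labeled with attributes $f_1,\dots,f_n\in F$ (any two columns labeled with the same attribute are equal), whose rows are pairwise different tuples from $E_k^n$ (the set of rows may be empty), each row being labeled with a set of decisions from $\mathcal{P}(\mathbb{N})$. Write $At(T)=\{f_1,\dots,f_n\}$ and $\Delta(T)$ for the set of rows. For a word $\alpha=(f_{i_1},\delta_1)\cdots(f_{i_m},\delta_m)$ with $f_{i_j}\in At(T)$, $\delta_j\in E_k$, the subtable $T\alpha$ consists of the rows of $T$ having value $\delta_j$ in column $f_{i_j}$ for all $j$ ($T\lambda=T$ for the empty word $\lambda$). Operations on tables: (1) removal of a column from a table with at least two columns (if groups of equal rows appear, only the first row of each group, with its decision set, is kept); (2) changing of decisions: the decision sets attached to rows are replaced arbitrarily by sets from $\mathcal{P}(\mathbb{N})$; (3) permutation of columns: swap two columns together with their attribute labels; (4) duplication of columns: add a copy of a column (with its label) next to it. A set $\mathcal{C}\subseteq\mathcal{M}_k(F)$ is a closed class if every table obtained from a table of $\mathcal{C}$ by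 finitely many such operations belongs to $\mathcal{C}$. A decision tree over $\mathcal{M}_k(F)$ is a finite directed tree with a root (unique node with no entering edge) and at least two nodes such that the root and the edges leaving the root are unlabeled, each worker node (neither root nor terminal) is labeled with an attribute from $F$, each edge leaving a worker node is labeled with a number from $E_k$, and each terminal node is labeled with a number from $\mathbb{N}$. For a complete path $\xi$ (root to terminal node) whose worker nodes are labeled $f_{j_1},\dots,f_{j_m}$ in order, with the edges leaving them labeled $\delta_1,\dots,\delta_m$, put $\pi(\xi)=(f_{j_1},\delta_1)\cdots(f_{j_m},\delta_m)$, $\varphi(\xi)=f_{j_1}\cdots f_{j_m}$ (both empty if $m=0$), and let $\tau(\xi)$ be the label of its terminal node. A nondeterministic decision tree for $T$ is a decision tree $\Gamma$ whose worker-node attributes lie in $At(T)$, such that $\bigcup_{\xi}\Delta(T\pi(\xi))=\Delta(T)$ (union over complete paths), and for every row $r\in\Delta(T)$ and every complete path $\xi$ with $r\in\Delta(T\pi(\xi))$, $\tau(\xi)$ belongs to the decision set of $r$. A decision tree is deterministic if exactly one edge leaves the root and the edges leaving each worker node have pairwise different labels; a deterministic decision tree for $T$ is a deterministic decision tree that is a nondeterministic decision tree for $T$. A complexity measure over $\mathcal{M}_k(F)$ is any map $\psi:F^*\to\mathbb{N}$, where $F^*$ is the set of finite words over $F$ including the empty word $\lambda$. For a tree, $\psi(\Gamma)=\max_\xi\psi(\varphi(\xi))$ over complete paths. For $T$ with columns labeled $f_1,\dots,f_n$: $\psi^i(T)=\psi(f_1\cdots f_n)$, $\psi^d(T)$ is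 the minimum complexity of a deterministic decision tree for $T$, $\psi^a(T)$ the minimum complexity of a nondeterministic decision tree for $T$. A t-pair $(\mathcal{C},\psi)$ consists of a closed class $\mathcal{C}\subseteq\mathcal{M}_k(F)$ and a complexity measure $\psi$ over $\mathcal{M}_k(F)$. For $b,c\in\{i,d,a\}$ define partial functions $\mathcal{U}^{bc}_{\mathcal{C}\psi}(n)=\max\{\psi^b(T):T\in\mathcal{C},\psi^c(T)\le n\}$ (defined iff this set is nonempty and finite) and $\mathcal{L}^{bc}_{\mathcal{C}\psi}(n)=\min\{\psi^b(T):T\in\mathcal{C},\psi^c(T)\ge n\}$ (defined iff this set is nonempty). For a partial function $g:\mathbb{N}\to\mathbb{N}$ with domain $\mathrm{Dom}(g)$, let $\mathrm{Dom}^+(g)=\{n\in\mathrm{Dom}(g):g(n)\ge n\}$, $\mathrm{Dom}^-(g)=\{n\in\mathrm{Dom}(g):g(n)\le n\}$. Its type $\operatorname{typ}(g)$ is: $\alpha$ if $\mathrm{Dom}(g)$ is infinite and $g$ is bounded above; $\beta$ if $\mathrm{Dom}(g)$ is infinite, $\mathrm{Dom}^+(g)$ is finite and $g$ is unbounded above; $\gamma$ if $\mathrm{Dom}^+(g)$ and $\mathrm{Dom}^-(g)$ are both infinite; $\delta$ if $\mathrm{Dom}(g)$ is infinite and $\mathrm{Dom}^-(g)$ is finite; $\epsilon$ if $\mathrm{Dom}(g)$ is finite. The upper type $\operatorname{typ}_u(\mathcal{C},\psi)$ is the $3\times3$ table with rows and columns indexed by $i,d,a$ (in this order) with entry $\operatorname{typ}(\mathcal{U}^{bc}_{\mathcal{C}\psi})$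 in row $b$, column $c$; the type $\operatorname{typ}(\mathcal{C},\psi)$ is the analogous table with entry the pair $\operatorname{typ}(\mathcal{L}^{bc}_{\mathcal{C}\psi})\operatorname{typ}(\mathcal{U}^{bc}_{\mathcal{C}\psi})$. Row by row (rows $i,d,a$; entries in columns $i,d,a$): $t_1$: all entries $\alpha$. $t_2$: $(\gamma,\epsilon,\epsilon)$; $(\alpha,\alpha,\alpha)$; $(\alpha,\alpha,\alpha)$. $t_3$: $(\gamma,\epsilon,\epsilon)$; $(\beta,\gamma,\epsilon)$; $(\alpha,\alpha,\alpha)$. $t_4$: $(\gamma,\epsilon,\epsilon)$; $(\gamma,\gamma,\epsilon)$; $(\alpha,\alpha,\alpha)$. $t_5$: $(\gamma,\epsilon,\epsilon)$; $(\gamma,\gamma,\gamma)$; $(\gamma,\gamma,\gamma)$. $t_6$: $(\gamma,\epsilon,\epsilon)$; $(\gamma,\gamma,\delta)$; $(\gamma,\gamma,\gamma)$. $t_7$: $(\gamma,\epsilon,\epsilon)$; $(\gamma,\gamma,\epsilon)$; $(\gamma,\gamma,\gamma)$. $T_1$: all entries $\epsilon\alpha$. $T_2$: $(\gamma\gamma,\epsilon\epsilon,\epsilon\epsilon)$; $(\alpha\alpha,\epsilon\alpha,\epsilon\alpha)$; $(\alpha\alpha,\epsilon\alpha,\epsilon\alpha)$. $T_3$: $(\gamma\gamma,\delta\epsilon,\epsilon\epsilon)$; $(\alpha\beta,\gamma\gamma,\epsilon\epsilon)$; $(\alpha\alpha,\alpha\alpha,\epsilon\alpha)$. $T_4$: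 $(\gamma\gamma,\gamma\epsilon,\epsilon\epsilon)$; $(\alpha\gamma,\gamma\gamma,\epsilon\epsilon)$; $(\alpha\alpha,\alpha\alpha,\epsilon\alpha)$. $T_5$: $(\gamma\gamma,\gamma\epsilon,\gamma\epsilon)$; $(\alpha\gamma,\gamma\gamma,\gamma\gamma)$; $(\alpha\gamma,\gamma\gamma,\gamma\gamma)$. $T_6$: $(\gamma\gamma,\gamma\epsilon,\gamma\epsilon)$; $(\alpha\gamma,\gamma\gamma,\gamma\delta)$; $(\alpha\gamma,\beta\gamma,\gamma\gamma)$. $T_7$: $(\gamma\gamma,\gamma\epsilon,\gamma\epsilon)$; $(\alpha\gamma,\gamma\gamma,\gamma\epsilon)$; $(\alpha\gamma,\alpha\gamma,\gamma\gamma)$. *)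

theory Defs
  imports Main
begin

text \<open>A decision table is a pair (column labels, list of rows); a row is a pair
(tuple of values, decision set). The order of rows is kept (it matters for
the removal of columns, where the first row of each group is kept).\<close>

type_synonym 'f dtable = "'f list \<times> (nat list \<times> nat set) list"

definition cols :: "'f dtable \<Rightarrow> 'f list" where "cols T = fst T"
definition rows :: "'f dtable \<Rightarrow> (nat list \<times> nat set) list" where "rows T = snd T"

definition valid_table :: "nat \<Rightarrow> 'f dtable \<Rightarrow> bool" where
  "valid_table k T \<longleftrightarrow>
     cols T \<noteq> [] \<and>
     (\<forall>(r, D) \<in> set (rows T). length r = length (cols T) \<and> (\<forall>x \<in> set r. x < k)
         \<and> finite D \<and> D \<noteq> {}) \<and>
     distinct (map fst (rows T)) \<and>
     (\<forall>(r, D) \<in> set (rows T). \<forall>i < length (cols T). \<forall>j < length (cols T).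
         cols T ! i = cols T ! j \<longrightarrow> r ! i = r ! j)"

definition At :: "'f dtable \<Rightarrow> 'f set" where "At T = set (cols T)"

definition del_at :: "nat \<Rightarrow> 'a list \<Rightarrow> 'a list" where
  "del_at i xs = take i xs @ drop (Suc i) xs"

definition swap_at :: "nat \<Rightarrow> nat \<Rightarrow> 'a list \<Rightarrow> 'a list" where
  "swap_at i j xs = xs[i := xs ! j, j := xs ! i]"

definition dup_at :: "nat \<Rightarrow> 'a list \<Rightarrow> 'a list" where
  "dup_at i xs = take (Suc i) xs @ [xs ! i] @ drop (Suc i) xs"

definition keep_first :: "(nat list \<times> nat set) list \<Rightarrow> (nat list \<times> nat set) list" where
  "keep_first rs = [rs ! p. p \<leftarrow> [0..<length rs], \<forall>q < p. fst (rs ! q) \<noteq> fst (rs ! p)]"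

inductive table_op :: "'f dtable \<Rightarrow> 'f dtable \<Rightarrow> bool" where
  remove_col: "2 \<le> length cs \<Longrightarrow> i < length cs \<Longrightarrow>
     table_op (cs, rs) (del_at i cs, keep_first (map (\<lambda>(r, D). (del_at i r, D)) rs))"
| change_dec: "map fst rs' = map fst rs \<Longrightarrow> (\<forall>D \<in> snd ` set rs'. finite D \<and> D \<noteq> {}) \<Longrightarrow>
     table_op (cs, rs) (cs, rs')"
| permute: "i < length cs \<Longrightarrow> j < length cs \<Longrightarrow>
     table_op (cs, rs) (swap_at i j cs, map (\<lambda>(r, D). (swap_at i j r, D)) rs)"
| duplicate: "i < length cs \<Longrightarrow>
     table_op (cs, rs) (dup_at i cs, map (\<lambda>(r, D). (dup_at i r, D)) rs)"

definition closed_class :: "nat \<Rightarrow> 'f dtable set \<Rightarrow> bool" where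
  "closed_class k C \<longleftrightarrow> C \<subseteq> {T. valid_table k T} \<and>
     (\<forall>T \<in> C. \<forall>T'. table_op\<^sup>*\<^sup>* T T' \<longrightarrow> T' \<in> C)"

definition row_in_sub :: "'f dtable \<Rightarrow> ('f \<times> nat) list \<Rightarrow> nat list \<Rightarrow> bool" where
  "row_in_sub T \<alpha> r \<longleftrightarrow>
     (\<forall>(f, \<delta>) \<in> set \<alpha>. \<exists>i < length (cols T). cols T ! i = f \<and> r ! i = \<delta>)"

text \<open>A node below the root: a terminal node labelled by a number, or a worker node
labelled by an attribute with a list of outgoing (edge label, subtree) pairs.
A decision tree is the (nonempty) list of subtrees hanging at the unlabelled root.\<close>

datatype 'f dnode = Leaf nat | Node 'f "(nat \<times> 'f dnode) list"

type_synonym 'f dtree = "'f dnode list"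

inductive wf_node :: "nat \<Rightarrow> 'f set \<Rightarrow> bool \<Rightarrow> 'f dnode \<Rightarrow> bool" for k A det where
  "wf_node k A det (Leaf d)"
| "f \<in> A \<Longrightarrow> cs \<noteq> [] \<Longrightarrow> (det \<longrightarrow> distinct (map fst cs)) \<Longrightarrow>
   (\<forall>p \<in> set cs. fst p < k \<and> wf_node k A det (snd p)) \<Longrightarrow> wf_node k A det (Node f cs)"

definition wf_tree :: "nat \<Rightarrow> 'f set \<Rightarrow> bool \<Rightarrow> 'f dtree \<Rightarrow> bool" where
  "wf_tree k A det \<Gamma> \<longleftrightarrow> \<Gamma> \<noteq> [] \<and> (det \<longrightarrow> length \<Gamma> = 1) \<and> (\<forall>c \<in> set \<Gamma>. wf_node k A det c)"

inductive node_path :: "'f dnode \<Rightarrow> ('f \<times> nat) list \<Rightarrow> nat \<Rightarrow> bool" where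
  "node_path (Leaf d) [] d"
| "(\<delta>, c) \<in> set cs \<Longrightarrow> node_path c w t \<Longrightarrow> node_path (Node f cs) ((f, \<delta>) # w) t"

definition complete_path :: "'f dtree \<Rightarrow> ('f \<times> nat) list \<Rightarrow> nat \<Rightarrow> bool" where
  "complete_path \<Gamma> w t \<longleftrightarrow> (\<exists>c \<in> set \<Gamma>. node_path c w t)"

definition nondet_tree_for :: "nat \<Rightarrow> 'f dtable \<Rightarrow> 'f dtree \<Rightarrow> bool" where
  "nondet_tree_for k T \<Gamma> \<longleftrightarrow> wf_tree k (At T) False \<Gamma> \<and>
     (\<forall>(r, D) \<in> set (rows T). \<exists>w t. complete_path \<Gamma> w t \<and> row_in_sub T w r) \<and>
     (\<forall>(r, D) \<in> set (rows T). \<forall>w t. complete_path \<Gamma> w t \<and> row_in_sub T w r \<longrightarrow> t \<in> D)"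

definition det_tree_for :: "nat \<Rightarrow> 'f dtable \<Rightarrow> 'f dtree \<Rightarrow> bool" where
  "det_tree_for k T \<Gamma> \<longleftrightarrow> wf_tree k (At T) True \<Gamma> \<and> nondet_tree_for k T \<Gamma>"

definition tree_cx :: "('f list \<Rightarrow> nat) \<Rightarrow> 'f dtree \<Rightarrow> nat" where
  "tree_cx \<psi> \<Gamma> = Max {\<psi> (map fst w) | w t. complete_path \<Gamma> w t}"

datatype cm = I | D | A

definition cx :: "nat \<Rightarrow> ('f list \<Rightarrow> nat) \<Rightarrow> cm \<Rightarrow> 'f dtable \<Rightarrow> nat" where
  "cx k \<psi> b T = (case b of
      I \<Rightarrow> \<psi> (cols T)
    | D \<Rightarrow> (LEAST n. \<exists>\<Gamma>. det_tree_for k T \<Gamma> \<and> tree_cx \<psi> \<Gamma> = n)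
    | A \<Rightarrow> (LEAST n. \<exists>\<Gamma>. nondet_tree_for k T \<Gamma> \<and> tree_cx \<psi> \<Gamma> = n))"

definition U_fun :: "nat \<Rightarrow> 'f dtable set \<Rightarrow> ('f list \<Rightarrow> nat) \<Rightarrow> cm \<Rightarrow> cm \<Rightarrow> nat \<Rightarrow> nat option" where
  "U_fun k C \<psi> b c n =
     (let S = {cx k \<psi> b T | T. T \<in> C \<and> cx k \<psi> c T \<le> n}
      in if S \<noteq> {} \<and> finite S then Some (Max S) else None)"

definition L_fun :: "nat \<Rightarrow> 'f dtable set \<Rightarrow> ('f list \<Rightarrow> nat) \<Rightarrow> cm \<Rightarrow> cm \<Rightarrow> nat \<Rightarrow> nat option" where
  "L_fun k C \<psi> b c n =
     (let S = {cx k \<psi> b T | T. T \<in> C \<and> cx k \<psi> c T \<ge> n}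
      in if S \<noteq> {} then Some (LEAST m. m \<in> S) else None)"

datatype ty = T\<alpha> | T\<beta> | T\<gamma> | T\<delta> | T\<epsilon>

definition Dom :: "(nat \<Rightarrow> nat option) \<Rightarrow> nat set" where
  "Dom g = {n. g n \<noteq> None}"
definition Dom_plus :: "(nat \<Rightarrow> nat option) \<Rightarrow> nat set" where
  "Dom_plus g = {n \<in> Dom g. the (g n) \<ge> n}"
definition Dom_minus :: "(nat \<Rightarrow> nat option) \<Rightarrow> nat set" where
  "Dom_minus g = {n \<in> Dom g. the (g n) \<le> n}"
definition bounded_above :: "(nat \<Rightarrow> nat option) \<Rightarrow> bool" where
  "bounded_above g \<longleftrightarrow> (\<exists>B. \<forall>n \<in> Dom g. the (g n) \<le> B)"

definition has_typ :: "(nat \<Rightarrow> nat option) \<Rightarrow> ty \<Rightarrow> bool" where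
  "has_typ g t \<longleftrightarrow> (case t of
      T\<alpha> \<Rightarrow> infinite (Dom g) \<and> bounded_above g
    | T\<beta> \<Rightarrow> infinite (Dom g) \<and> finite (Dom_plus g) \<and> \<not> bounded_above g
    | T\<gamma> \<Rightarrow> infinite (Dom_plus g) \<and> infinite (Dom_minus g)
    | T\<delta> \<Rightarrow> infinite (Dom g) \<and> finite (Dom_minus g)
    | T\<epsilon> \<Rightarrow> finite (Dom g))"

definition typ_of :: "(nat \<Rightarrow> nat option) \<Rightarrow> ty" where
  "typ_of g = (THE t. has_typ g t)"

definition typ_u :: "nat \<Rightarrow> 'f dtable set \<Rightarrow> ('f list \<Rightarrow> nat) \<Rightarrow> cm \<Rightarrow> cm \<Rightarrow> ty" where
  "typ_u k C \<psi> b c = typ_of (U_fun k C \<psi> b c)"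

definition typ_full :: "nat \<Rightarrow> 'f dtable set \<Rightarrow> ('f list \<Rightarrow> nat) \<Rightarrow> cm \<Rightarrow> cm \<Rightarrow> ty \<times> ty" where
  "typ_full k C \<psi> b c = (typ_of (L_fun k C \<psi> b c), typ_of (U_fun k C \<psi> b c))"

definition mk3 :: "'a \<times> 'a \<times> 'a \<Rightarrow> 'a \<times> 'a \<times> 'a \<Rightarrow> 'a \<times> 'a \<times> 'a \<Rightarrow> cm \<Rightarrow> cm \<Rightarrow> 'a" where
  "mk3 ri rd ra b c =
     (let r = (case b of I \<Rightarrow> ri | D \<Rightarrow> rd | A \<Rightarrow> ra) in
      case c of I \<Rightarrow> fst r | D \<Rightarrow> fst (snd r) | A \<Rightarrow> snd (snd r))"

definition tt :: "nat \<Rightarrow> cm \<Rightarrow> cm \<Rightarrow> ty" where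
  "tt j = (if j = 1 then mk3 (T\<alpha>, T\<alpha>, T\<alpha>) (T\<alpha>, T\<alpha>, T\<alpha>) (T\<alpha>, T\<alpha>, T\<alpha>)
    else if j = 2 then mk3 (T\<gamma>, T\<epsilon>, T\<epsilon>) (T\<alpha>, T\<alpha>, T\<alpha>) (T\<alpha>, T\<alpha>, T\<alpha>)
    else if j = 3 then mk3 (T\<gamma>, T\<epsilon>, T\<epsilon>) (T\<beta>, T\<gamma>, T\<epsilon>) (T\<alpha>, T\<alpha>, T\<alpha>)
    else if j = 4 then mk3 (T\<gamma>, T\<epsilon>, T\<epsilon>) (T\<gamma>, T\<gamma>, T\<epsilon>) (T\<alpha>, T\<alpha>, T\<alpha>)
    else if j = 5 then mk3 (T\<gamma>, T\<epsilon>, T\<epsilon>) (T\<gamma>, T\<gamma>, T\<gamma>) (T\<gamma>, T\<gamma>, T\<gamma>)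
    else if j = 6 then mk3 (T\<gamma>, T\<epsilon>, T\<epsilon>) (T\<gamma>, T\<gamma>, T\<delta>) (T\<gamma>, T\<gamma>, T\<gamma>)
    else mk3 (T\<gamma>, T\<epsilon>, T\<epsilon>) (T\<gamma>, T\<gamma>, T\<epsilon>) (T\<gamma>, T\<gamma>, T\<gamma>))"

definition TT :: "nat \<Rightarrow> cm \<Rightarrow> cm \<Rightarrow> ty \<times> ty" where
  "TT j = (if j = 1 then
      mk3 ((T\<epsilon>,T\<alpha>), (T\<epsilon>,T\<alpha>), (T\<epsilon>,T\<alpha>)) ((T\<epsilon>,T\<alpha>), (T\<epsilon>,T\<alpha>), (T\<epsilon>,T\<alpha>)) ((T\<epsilon>,T\<alpha>), (T\<epsilon>,T\<alpha>), (T\<epsilon>,T\<alpha>))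
    else if j = 2 then
      mk3 ((T\<gamma>,T\<gamma>), (T\<epsilon>,T\<epsilon>), (T\<epsilon>,T\<epsilon>)) ((T\<alpha>,T\<alpha>), (T\<epsilon>,T\<alpha>), (T\<epsilon>,T\<alpha>)) ((T\<alpha>,T\<alpha>), (T\<epsilon>,T\<alpha>), (T\<epsilon>,T\<alpha>))
    else if j = 3 then
      mk3 ((T\<gamma>,T\<gamma>), (T\<delta>,T\<epsilon>), (T\<epsilon>,T\<epsilon>)) ((T\<alpha>,T\<beta>), (T\<gamma>,T\<gamma>), (T\<epsilon>,T\<epsilon>)) ((T\<alpha>,T\<alpha>), (T\<alpha>,T\<alpha>), (T\<epsilon>,T\<alpha>))
    else if j = 4 then
      mk3 ((T\<gamma>,T\<gamma>), (T\<gamma>,T\<epsilon>), (T\<epsilon>,T\<epsilon>)) ((T\<alpha>,T\<gamma>), (T\<gamma>,T\<gamma>), (T\<epsilon>,T\<epsilon>)) ((T\<alpha>,T\<alpha>), (T\<alpha>,T\<alpha>), (T\<epsilon>,T\<alpha>))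
    else if j = 5 then
      mk3 ((T\<gamma>,T\<gamma>), (T\<gamma>,T\<epsilon>), (T\<gamma>,T\<epsilon>)) ((T\<alpha>,T\<gamma>), (T\<gamma>,T\<gamma>), (T\<gamma>,T\<gamma>)) ((T\<alpha>,T\<gamma>), (T\<gamma>,T\<gamma>), (T\<gamma>,T\<gamma>))
    else if j = 6 then
      mk3 ((T\<gamma>,T\<gamma>), (T\<gamma>,T\<epsilon>), (T\<gamma>,T\<epsilon>)) ((T\<alpha>,T\<gamma>), (T\<gamma>,T\<gamma>), (T\<gamma>,T\<delta>)) ((T\<alpha>,T\<gamma>), (T\<beta>,T\<gamma>), (T\<gamma>,T\<gamma>))
    else
      mk3 ((T\<gamma>,T\<gamma>), (T\<gamma>,T\<epsilon>), (T\<gamma>,T\<epsilon>)) ((T\<alpha>,T\<gamma>), (T\<gamma>,T\<gamma>), (T\<gamma>,T\<epsilon>)) ((T\<alpha>,T\<gamma>), (T\<alpha>,T\<gamma>), (T\<gamma>,T\<gamma>)))"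

end

theory Submission
  imports Defs "HOL-Library.Nat_Bijection"
begin

(*
  For every valid table psi^a <= psi^d <= psi^i, since the deterministic tree querying all
  columns has complexity psi^i; so any two of the three complexities are pointwise comparable
  on C.  For comparable f and g, the types of L^{fg} and of U^{gf} are decided by the same
  properties of f and g: boundedness of the larger one, finiteness of its values on the
  sublevel sets of the smaller one, and finiteness of the set of coincidence values, resp.
  of the set of m with g x <= m --> f x <= m on C.  Matching the two case distinctions gives
  typ L^{bc} = dual (typ U^{cb}), where dual swaps alpha with epsilon and beta with delta;
  T_j arises from t_j by exactly this rule.  The empty class is excluded since t_j(i,i) is
  never epsilon.
*)

lemma finite_Dom_plus_if_bounded_above:
  assumes "bounded_above g"
  shows "finite (Dom_plus g)"
proof -
  obtain B where "\<forall>n \<in> Dom g. the (g n) \<le> B"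
    using assms by (auto simp: bounded_above_def)
  then have "Dom_plus g \<subseteq> {..B}"
    by (auto simp: Dom_plus_def)
  then show ?thesis
    using finite_subset by blast
qed

lemma has_typ_unique:
  assumes "has_typ g t" and "has_typ g t'"
  shows "t = t'"
proof -
  have "Dom g = Dom_plus g \<union> Dom_minus g" and "Dom_plus g \<subseteq> Dom g" and "Dom_minus g \<subseteq> Dom g"
    by (auto simp: Dom_def Dom_plus_def Dom_minus_def)
  then show ?thesis
    using assms finite_Dom_plus_if_bounded_above[of g]
    by (cases t; cases t'; simp add: has_typ_def; metis finite_Un finite_subset)
qed

lemma typ_of_eqI: "has_typ g t \<Longrightarrow> typ_of g = t"
  unfolding typ_of_def using has_typ_unique by blast

section \<open>Upper and lower functions\<close>

lemma not_bdd_above_image_nat_iff: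
  fixes g :: "'x \<Rightarrow> nat"
  shows "\<not> bdd_above (g ` X) \<longleftrightarrow> (\<forall>n. \<exists>x \<in> X. n \<le> g x)"
  unfolding bdd_above_def by (auto simp: not_le) (meson less_imp_le, meson Suc_le_eq)

lemma finite_image_Collect_if_bdd_above:
  fixes f :: "'x \<Rightarrow> nat"
  assumes "bdd_above (f ` C)"
  shows "finite (f ` {x \<in> C. P x})"
proof -
  have "f ` {x \<in> C. P x} \<subseteq> f ` C"
    by blast
  then show ?thesis
    using assms by (metis bdd_above_nat finite_subset)
qed

lemma infinite_Collect_ex_le:
  fixes g :: "'x \<Rightarrow> nat"
  assumes "C \<noteq> {}"
  shows "infinite {n. \<exists>x \<in> C. g x \<le> n}"
proof -
  obtain x0 where "x0 \<in> C"
    using assms by blast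
  then have "{g x0..} \<subseteq> {n. \<exists>x \<in> C. g x \<le> n}"
    by auto
  then show ?thesis
    using infinite_Ici finite_subset by blast
qed

text \<open>\<^const>\<open>U_fun\<close> and \<^const>\<open>L_fun\<close> for arbitrary functions \<open>f\<close> (the measured one) and
  \<open>g\<close> (the constrained one) on \<open>C\<close> in place of the complexities of tables.\<close>

definition upper_fun :: "'x set \<Rightarrow> ('x \<Rightarrow> nat) \<Rightarrow> ('x \<Rightarrow> nat) \<Rightarrow> nat \<Rightarrow> nat option" where
  "upper_fun C f g n =
     (let S = f ` {x \<in> C. g x \<le> n} in if S \<noteq> {} \<and> finite S then Some (Max S) else None)"

definition lower_fun :: "'x set \<Rightarrow> ('x \<Rightarrow> nat) \<Rightarrow> ('x \<Rightarrow> nat) \<Rightarrow> nat \<Rightarrow> nat option" where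
  "lower_fun C f g n = (let S = f ` {x \<in> C. n \<le> g x} in if S \<noteq> {} then Some (Inf S) else None)"

lemma Dom_upper_fun:
  assumes "\<And>n. finite (f ` {x \<in> C. g x \<le> n})"
  shows "Dom (upper_fun C f g) = {n. \<exists>x \<in> C. g x \<le> n}"
  using assms by (auto simp: Dom_def upper_fun_def)

lemma finite_Dom_upper_fun_iff:
  assumes "C \<noteq> {}"
  shows "finite (Dom (upper_fun C f g)) \<longleftrightarrow> \<not> (\<forall>n. finite (f ` {x \<in> C. g x \<le> n}))"
proof (cases "\<forall>n. finite (f ` {x \<in> C. g x \<le> n})")
  case True
  then show ?thesis
    using infinite_Collect_ex_le[OF assms, of g] by (simp add: Dom_upper_fun)
next
  case False
  then obtain m where m: "infinite (f ` {x \<in> C. g x \<le> m})"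
    by blast
  have "Dom (upper_fun C f g) \<subseteq> {..<m}"
  proof
    fix n
    assume "n \<in> Dom (upper_fun C f g)"
    then have "finite (f ` {x \<in> C. g x \<le> n})"
      by (simp add: Dom_def upper_fun_def Let_def split: if_splits)
    moreover have "f ` {x \<in> C. g x \<le> m} \<subseteq> f ` {x \<in> C. g x \<le> n}" if "m \<le> n"
      using that by force
    ultimately show "n \<in> {..<m}"
      using m by (meson finite_subset lessThan_iff not_le)
  qed
  then show ?thesis
    using False finite_subset by blast
qed

lemma the_upper_fun_bounds:
  assumes "\<And>n. finite (f ` {x \<in> C. g x \<le> n})" and "n \<in> Dom (upper_fun C f g)"
  shows the_upper_fun_le_iff:
      "the (upper_fun C f g n) \<le> m \<longleftrightarrow> (\<forall>x \<in> C. g x \<le> n \<longrightarrow> f x \<le> m)"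
    and le_the_upper_fun_iff:
      "m \<le> the (upper_fun C f g n) \<longleftrightarrow> (\<exists>x \<in> C. g x \<le> n \<and> m \<le> f x)"
proof -
  let ?S = "f ` {x \<in> C. g x \<le> n}"
  have "?S \<noteq> {}"
    using assms by (auto simp: Dom_upper_fun)
  then have "upper_fun C f g n = Some (Max ?S)"
    using assms(1) by (simp add: upper_fun_def)
  then show "the (upper_fun C f g n) \<le> m \<longleftrightarrow> (\<forall>x \<in> C. g x \<le> n \<longrightarrow> f x \<le> m)"
    and "m \<le> the (upper_fun C f g n) \<longleftrightarrow> (\<exists>x \<in> C. g x \<le> n \<and> m \<le> f x)"
    using assms(1) \<open>?S \<noteq> {}\<close> by (auto simp: Max_le_iff Max_ge_iff)
qed

lemma bounded_above_upper_fun_iff: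
  assumes "\<And>n. finite (f ` {x \<in> C. g x \<le> n})"
  shows "bounded_above (upper_fun C f g) \<longleftrightarrow> bdd_above (f ` C)"
  unfolding bounded_above_def bdd_above_def
  using assms by (auto simp: the_upper_fun_le_iff) (auto simp: Dom_upper_fun)

lemma finite_Dom_minus_upper_fun_iff:
  assumes "\<And>n. finite (f ` {x \<in> C. g x \<le> n})" and "C \<noteq> {}"
  shows "finite (Dom_minus (upper_fun C f g)) \<longleftrightarrow> finite {m. \<forall>x \<in> C. g x \<le> m \<longrightarrow> f x \<le> m}"
proof -
  let ?P = "{m. \<forall>x \<in> C. g x \<le> m \<longrightarrow> f x \<le> m}"
  obtain x0 where "x0 \<in> C"
    using assms(2) by blast
  have "Dom_minus (upper_fun C f g) = {n. \<exists>x \<in> C. g x \<le> n} \<inter> ?P"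
    using the_upper_fun_le_iff[OF assms(1)] unfolding Dom_minus_def Dom_upper_fun[OF assms(1)]
    by blast
  then have "Dom_minus (upper_fun C f g) \<subseteq> ?P"
    and "?P \<subseteq> Dom_minus (upper_fun C f g) \<union> {..<g x0}"
    using \<open>x0 \<in> C\<close> by (auto simp: not_less)
  then show ?thesis
    by (meson finite_Un finite_lessThan finite_subset)
qed

lemma Dom_lower_fun: "Dom (lower_fun C f g) = {n. \<exists>x \<in> C. n \<le> g x}"
  by (auto simp: Dom_def lower_fun_def)

lemma Dom_lower_fun_eq_UNIV:
  assumes "\<not> bdd_above (g ` C)"
  shows "Dom (lower_fun C f g) = UNIV"
  using assms by (auto simp: Dom_lower_fun not_bdd_above_image_nat_iff)

lemma finite_Dom_lower_fun_iff: "finite (Dom (lower_fun C f g)) \<longleftrightarrow> bdd_above (g ` C)"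
proof -
  have "Dom (lower_fun C f g) \<subseteq> {..B}" if "\<forall>x \<in> C. g x \<le> B" for B
    using that by (auto simp: Dom_lower_fun)
  then have "finite (Dom (lower_fun C f g))" if "bdd_above (g ` C)"
    using that finite_subset by (fastforce simp: bdd_above_def)
  then show ?thesis
    using Dom_lower_fun_eq_UNIV by (metis infinite_UNIV_nat)
qed

lemma the_lower_fun_bounds:
  assumes "n \<in> Dom (lower_fun C f g)"
  shows the_lower_fun_le_iff:
      "the (lower_fun C f g n) \<le> m \<longleftrightarrow> (\<exists>x \<in> C. n \<le> g x \<and> f x \<le> m)"
    and le_the_lower_fun_iff:
      "m \<le> the (lower_fun C f g n) \<longleftrightarrow> (\<forall>x \<in> C. n \<le> g x \<longrightarrow> m \<le> f x)"
proof -
  let ?S = "f ` {x \<in> C. n \<le> g x}"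
  have "?S \<noteq> {}"
    using assms by (auto simp: Dom_lower_fun)
  then have L: "lower_fun C f g n = Some (Inf ?S)"
    by (simp add: lower_fun_def)
  have "Inf ?S \<le> m \<longleftrightarrow> (\<exists>s \<in> ?S. s \<le> m)"
    using Inf_nat_def1[OF \<open>?S \<noteq> {}\<close>] cInf_lower[of _ ?S] by (auto intro: order.trans)
  then show "the (lower_fun C f g n) \<le> m \<longleftrightarrow> (\<exists>x \<in> C. n \<le> g x \<and> f x \<le> m)"
    by (auto simp: L)
  show "m \<le> the (lower_fun C f g n) \<longleftrightarrow> (\<forall>x \<in> C. n \<le> g x \<longrightarrow> m \<le> f x)"
    using \<open>?S \<noteq> {}\<close> by (auto simp: L le_cInf_iff)
qed

lemma bounded_above_lower_fun_iff:
  assumes "\<not> bdd_above (g ` C)"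
  shows "bounded_above (lower_fun C f g) \<longleftrightarrow> (\<exists>m. \<not> bdd_above (g ` {x \<in> C. f x \<le> m}))"
  unfolding bounded_above_def Dom_lower_fun_eq_UNIV[OF assms]
  by (auto simp: the_lower_fun_le_iff Dom_lower_fun_eq_UNIV[OF assms] not_bdd_above_image_nat_iff)
    blast+

lemma finite_Dom_plus_lower_fun_iff:
  assumes "\<not> bdd_above (g ` C)"
  shows "finite (Dom_plus (lower_fun C f g)) \<longleftrightarrow> finite {m. \<forall>x \<in> C. f x \<le> m \<longrightarrow> g x \<le> m}"
proof -
  have "Suc -` Dom_plus (lower_fun C f g) = {m. \<forall>x \<in> C. f x \<le> m \<longrightarrow> g x \<le> m}"
    by (auto simp: Dom_plus_def Dom_lower_fun_eq_UNIV[OF assms] le_the_lower_fun_iff Suc_le_eq)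
  then show ?thesis
    by (metis finite_vimage_Suc_iff)
qed

lemma typ_upper_fun_le:
  assumes "C \<noteq> {}" and le: "\<forall>x \<in> C. f x \<le> g x"
  shows "typ_of (upper_fun C f g) =
    (if bdd_above (f ` C) then T\<alpha>
     else if finite {n. \<exists>x \<in> C. f x = n \<and> g x = n} then T\<beta> else T\<gamma>)"
proof -
  let ?U = "upper_fun C f g"
  have fin: "finite (f ` {x \<in> C. g x \<le> n})" for n
    using le by (force intro: finite_subset[of _ "{..n}"])
  have "Dom_minus ?U = Dom ?U"
    using le by (force simp: Dom_minus_def the_upper_fun_le_iff[OF fin])
  moreover have "Dom_plus ?U = {n. \<exists>x \<in> C. f x = n \<and> g x = n}"
  proof (intro set_eqI iffI)
    fix n
    assume "n \<in> Dom_plus ?U"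
    then have "\<exists>x \<in> C. g x \<le> n \<and> n \<le> f x"
      by (auto simp: Dom_plus_def le_the_upper_fun_iff[OF fin])
    then show "n \<in> {n. \<exists>x \<in> C. f x = n \<and> g x = n}"
      using le by force
  next
    fix n
    assume "n \<in> {n. \<exists>x \<in> C. f x = n \<and> g x = n}"
    then have "n \<in> Dom ?U" and "\<exists>x \<in> C. g x \<le> n \<and> n \<le> f x"
      by (force simp: Dom_upper_fun[OF fin])+
    then show "n \<in> Dom_plus ?U"
      by (auto simp: Dom_plus_def le_the_upper_fun_iff[OF fin])
  qed
  ultimately show ?thesis
    using fin finite_Dom_upper_fun_iff[OF assms(1)] bounded_above_upper_fun_iff[OF fin]
    by (intro typ_of_eqI) (auto simp: has_typ_def)
qed

lemma typ_lower_fun_ge: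
  assumes ge: "\<forall>x \<in> C. g x \<le> f x"
  shows "typ_of (lower_fun C f g) =
    (if bdd_above (g ` C) then T\<epsilon>
     else if finite {n. \<exists>x \<in> C. f x = n \<and> g x = n} then T\<delta> else T\<gamma>)"
proof (cases "bdd_above (g ` C)")
  case True
  then show ?thesis
    by (intro typ_of_eqI) (simp add: has_typ_def finite_Dom_lower_fun_iff)
next
  case False
  let ?L = "lower_fun C f g"
  have "Dom_plus ?L = Dom ?L"
    using ge by (auto simp: Dom_plus_def le_the_lower_fun_iff) (meson order.trans)
  moreover have "Dom_minus ?L = {n. \<exists>x \<in> C. f x = n \<and> g x = n}"
  proof (intro set_eqI iffI)
    fix n
    assume "n \<in> Dom_minus ?L"
    then have "\<exists>x \<in> C. n \<le> g x \<and> f x \<le> n"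
      by (auto simp: Dom_minus_def the_lower_fun_le_iff)
    then show "n \<in> {n. \<exists>x \<in> C. f x = n \<and> g x = n}"
      using ge by force
  next
    fix n
    assume "n \<in> {n. \<exists>x \<in> C. f x = n \<and> g x = n}"
    then have "n \<in> Dom ?L" and "\<exists>x \<in> C. n \<le> g x \<and> f x \<le> n"
      by (force simp: Dom_lower_fun)+
    then show "n \<in> Dom_minus ?L"
      by (auto simp: Dom_minus_def the_lower_fun_le_iff)
  qed
  ultimately show ?thesis
    using False finite_Dom_lower_fun_iff[of C f g] finite_Dom_plus_if_bounded_above[of ?L]
    by (intro typ_of_eqI) (auto simp: has_typ_def)
qed

lemma typ_upper_fun_ge:
  assumes "C \<noteq> {}" and ge: "\<forall>x \<in> C. g x \<le> f x"
  shows "typ_of (upper_fun C f g) =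
    (if bdd_above (f ` C) then T\<alpha>
     else if \<forall>n. finite (f ` {x \<in> C. g x \<le> n}) then
       (if finite {m. \<forall>x \<in> C. g x \<le> m \<longrightarrow> f x \<le> m} then T\<delta> else T\<gamma>)
     else T\<epsilon>)"
proof (cases "\<forall>n. finite (f ` {x \<in> C. g x \<le> n})")
  case False
  then have "\<not> bdd_above (f ` C)"
    using finite_image_Collect_if_bdd_above[of f C] by auto
  then show ?thesis
    unfolding if_not_P[OF False] if_not_P[OF \<open>\<not> bdd_above (f ` C)\<close>]
    using False finite_Dom_upper_fun_iff[OF assms(1), of f g]
    by (intro typ_of_eqI) (simp add: has_typ_def)
next
  case True
  note fin = True[rule_format]
  let ?U = "upper_fun C f g"
  have "f ` C \<subseteq> Dom_plus ?U"
  proof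
    fix n
    assume "n \<in> f ` C"
    then obtain x where "x \<in> C" "g x \<le> n" "n \<le> f x"
      using ge by force
    moreover from this have "n \<in> Dom ?U"
      by (auto simp: Dom_upper_fun[OF fin])
    ultimately show "n \<in> Dom_plus ?U"
      by (auto simp: Dom_plus_def le_the_upper_fun_iff[OF fin])
  qed
  then have "\<not> bdd_above (f ` C) \<Longrightarrow> infinite (Dom_plus ?U)"
    by (metis bdd_above_nat finite_subset)
  then show ?thesis
    using True finite_Dom_upper_fun_iff[OF assms(1)] finite_Dom_minus_upper_fun_iff[OF fin assms(1)]
      bounded_above_upper_fun_iff[OF fin]
    by (intro typ_of_eqI) (auto simp: has_typ_def)
qed

lemma typ_lower_fun_le:
  assumes le: "\<forall>x \<in> C. f x \<le> g x"
  shows "typ_of (lower_fun C f g) =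
    (if bdd_above (g ` C) then T\<epsilon>
     else if \<forall>n. finite (g ` {x \<in> C. f x \<le> n}) then
       (if finite {m. \<forall>x \<in> C. f x \<le> m \<longrightarrow> g x \<le> m} then T\<beta> else T\<gamma>)
     else T\<alpha>)"
proof (cases "bdd_above (g ` C)")
  case True
  then show ?thesis
    by (intro typ_of_eqI) (simp add: has_typ_def finite_Dom_lower_fun_iff)
next
  case False
  let ?L = "lower_fun C f g"
  note dom = Dom_lower_fun_eq_UNIV[OF False, of f]
  have "infinite (Dom_minus ?L)" if fin: "\<forall>n. finite (g ` {x \<in> C. f x \<le> n})"
  proof -
    have "f ` C \<subseteq> Dom_minus ?L"
      using le by (force simp: Dom_minus_def dom the_lower_fun_le_iff)
    moreover have "\<not> bdd_above (f ` C)"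
    proof
      assume "bdd_above (f ` C)"
      then obtain B where "\<forall>x \<in> C. f x \<le> B"
        by (auto simp: bdd_above_def)
      then have "g ` {x \<in> C. f x \<le> B} = g ` C"
        by auto
      then show False
        using False fin bdd_above_nat by metis
    qed
    ultimately show ?thesis
      by (metis bdd_above_nat finite_subset)
  qed
  then show ?thesis
    using False bounded_above_lower_fun_iff[OF False, of f] finite_Dom_plus_lower_fun_iff[OF False]
      finite_Dom_plus_if_bounded_above[of ?L]
    by (intro typ_of_eqI) (auto simp: has_typ_def dom bdd_above_nat)
qed

fun dual_typ :: "ty \<Rightarrow> ty" where
  "dual_typ T\<alpha> = T\<epsilon>"
| "dual_typ T\<beta> = T\<delta>"
| "dual_typ T\<gamma> = T\<gamma>"
| "dual_typ T\<delta> = T\<beta>"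
| "dual_typ T\<epsilon> = T\<alpha>"

lemma typ_lower_fun_eq_dual_typ_upper_fun:
  assumes "C \<noteq> {}" and "(\<forall>x \<in> C. f x \<le> g x) \<or> (\<forall>x \<in> C. g x \<le> f x)"
  shows "typ_of (lower_fun C f g) = dual_typ (typ_of (upper_fun C g f))"
  using assms(2)
proof
  assume "\<forall>x \<in> C. f x \<le> g x"
  then show ?thesis
    by (simp add: typ_lower_fun_le typ_upper_fun_ge[OF assms(1)])
next
  assume "\<forall>x \<in> C. g x \<le> f x"
  moreover have "{n. \<exists>x \<in> C. g x = n \<and> f x = n} = {n. \<exists>x \<in> C. f x = n \<and> g x = n}"
    by blast
  ultimately show ?thesis
    by (simp add: typ_lower_fun_ge typ_upper_fun_le[OF assms(1)])
qed

section \<open>Trees querying every column\<close>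

fun full_node :: "nat \<Rightarrow> (nat list \<Rightarrow> nat) \<Rightarrow> 'f list \<Rightarrow> 'f dnode" where
  "full_node k dec [] = Leaf (dec [])"
| "full_node k dec (f # fs) = Node f (map (\<lambda>\<delta>. (\<delta>, full_node k (\<lambda>v. dec (\<delta> # v)) fs)) [0..<k])"

inductive_simps node_path_Leaf: "node_path (Leaf d) w t"
inductive_simps node_path_Node: "node_path (Node f cs) w t"

lemma node_path_full_node_iff:
  "node_path (full_node k dec fs) w t \<longleftrightarrow>
     map fst w = fs \<and> (\<forall>\<delta> \<in> set (map snd w). \<delta> < k) \<and> t = dec (map snd w)"
proof (induction fs arbitrary: dec w t)
  case Nil
  then show ?case
    by (auto simp: node_path_Leaf)
next
  case (Cons f fs)
  have "node_path (full_node k dec (f # fs)) w t \<longleftrightarrow>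
      (\<exists>\<delta> w'. w = (f, \<delta>) # w' \<and> \<delta> < k \<and> node_path (full_node k (\<lambda>v. dec (\<delta> # v)) fs) w' t)"
    by (auto simp: node_path_Node image_iff)
  then show ?case
    by (cases w) (auto simp: Cons.IH)
qed

lemma wf_node_full_node:
  assumes "0 < k" and "set fs \<subseteq> X"
  shows "wf_node k X det (full_node k dec fs)"
  using assms(2)
proof (induction fs arbitrary: dec)
  case Nil
  then show ?case
    by (simp add: wf_node.intros(1))
next
  case (Cons f fs)
  have "map fst (map (\<lambda>\<delta>. (\<delta>, full_node k (\<lambda>v. dec (\<delta> # v)) fs)) [0..<k]) = [0..<k]"
    by (simp add: comp_def)
  then show ?case
    using Cons assms(1) by (auto intro!: wf_node.intros(2))
qed

lemma valid_table_row:
  assumes "valid_table k T" and "(r, Ds) \<in> set (rows T)"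
  shows "length r = length (cols T)" and "\<forall>x \<in> set r. x < k" and "Ds \<noteq> {}"
    and "\<And>i j. i < length (cols T) \<Longrightarrow> j < length (cols T) \<Longrightarrow> cols T ! i = cols T ! j \<Longrightarrow>
           r ! i = r ! j"
  using assms unfolding valid_table_def by fast+

lemma row_in_sub_iff:
  assumes T: "valid_table k T" "(r, Ds) \<in> set (rows T)" and w: "map fst w = cols T"
  shows "row_in_sub T w r \<longleftrightarrow> r = map snd w"
proof -
  have len: "length w = length (cols T)" "length r = length (cols T)"
    using valid_table_row(1)[OF T] length_map[of fst w] by (simp_all add: w)
  have fst_nth: "fst (w ! i) = cols T ! i" if "i < length w" for i
    using w that by (metis nth_map)
  show ?thesis
  proof
    assume sub: "row_in_sub T w r"
    show "r = map snd w"
    proof (rule nth_equalityI)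
      fix j
      assume "j < length r"
      then have j: "j < length w" "j < length (cols T)"
        using len by simp_all
      then have "(cols T ! j, snd (w ! j)) \<in> set w"
        using fst_nth[of j] by (metis nth_mem prod.collapse)
      then obtain i where i: "i < length (cols T)" "cols T ! i = cols T ! j" "r ! i = snd (w ! j)"
        using bspec[OF sub[unfolded row_in_sub_def]] by fastforce
      have "r ! j = r ! i"
        using valid_table_row(4)[OF T j(2) i(1)] i(2) by simp
      then show "r ! j = map snd w ! j"
        using i(3) j by simp
    qed (simp add: len)
  next
    assume r: "r = map snd w"
    show "row_in_sub T w r"
      unfolding row_in_sub_def
    proof (clarify)
      fix f \<delta>
      assume "(f, \<delta>) \<in> set w"
      then obtain i where i: "i < length w" "w ! i = (f, \<delta>)"
        by (metis in_set_conv_nth)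
      then show "\<exists>i < length (cols T). cols T ! i = f \<and> r ! i = \<delta>"
        using r len fst_nth[OF i(1)] by (intro exI[of _ i]) auto
    qed
  qed
qed

(* Arbitrary on tuples that are not rows of T, where the decision of a tree does not matter. *)
definition row_decision :: "'f dtable \<Rightarrow> nat list \<Rightarrow> nat" where
  "row_decision T v = (SOME d. d \<in> the (map_of (rows T) v))"

lemma row_decision_mem:
  assumes "valid_table k T" and "(r, Ds) \<in> set (rows T)"
  shows "row_decision T r \<in> Ds"
proof -
  have "map_of (rows T) r = Some Ds"
    using assms by (simp add: valid_table_def map_of_is_SomeI)
  then show ?thesis
    using valid_table_row(3)[OF assms] by (simp add: row_decision_def some_in_eq)
qed

definition full_tree :: "nat \<Rightarrow> 'f dtable \<Rightarrow> 'f dtree" where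
  "full_tree k T = [full_node k (row_decision T) (cols T)]"

lemma complete_path_full_tree_iff:
  "complete_path (full_tree k T) w t \<longleftrightarrow>
     map fst w = cols T \<and> (\<forall>\<delta> \<in> set (map snd w). \<delta> < k) \<and> t = row_decision T (map snd w)"
  by (simp add: full_tree_def complete_path_def node_path_full_node_iff)

lemma det_tree_for_full_tree:
  assumes "valid_table k T" and "0 < k"
  shows "det_tree_for k T (full_tree k T)"
proof -
  have "wf_tree k (At T) det (full_tree k T)" for det
    using wf_node_full_node[OF assms(2), of "cols T" "set (cols T)"]
    by (simp add: wf_tree_def full_tree_def At_def)
  moreover have "\<exists>w t. complete_path (full_tree k T) w t \<and> row_in_sub T w r"
    if "(r, Ds) \<in> set (rows T)" for r Ds
  proof -
    have "map fst (zip (cols T) r) = cols T" and "map snd (zip (cols T) r) = r"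
      using valid_table_row(1)[OF assms(1) that] by simp_all
    then show ?thesis
      using valid_table_row(2)[OF assms(1) that] row_in_sub_iff[OF assms(1) that]
      by (metis complete_path_full_tree_iff)
  qed
  moreover have "t \<in> Ds"
    if "(r, Ds) \<in> set (rows T)" "complete_path (full_tree k T) w t" "row_in_sub T w r" for r Ds w t
    using that row_decision_mem[OF assms(1)] row_in_sub_iff[OF assms(1)]
    by (metis complete_path_full_tree_iff)
  ultimately show ?thesis
    by (auto simp: det_tree_for_def nondet_tree_for_def)
qed

lemma tree_cx_full_tree:
  assumes "0 < k"
  shows "tree_cx \<psi> (full_tree k T) = \<psi> (cols T)"
proof -
  let ?w = "zip (cols T) (replicate (length (cols T)) 0)"
  have "complete_path (full_tree k T) ?w (row_decision T (map snd ?w))"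
    using assms by (simp add: complete_path_full_tree_iff)
  moreover have "map fst ?w = cols T"
    by simp
  ultimately have "\<psi> (cols T) \<in> {\<psi> (map fst w) | w t. complete_path (full_tree k T) w t}"
    by (metis (mono_tags, lifting) mem_Collect_eq)
  then have "{\<psi> (map fst w) | w t. complete_path (full_tree k T) w t} = {\<psi> (cols T)}"
    by (auto simp: complete_path_full_tree_iff)
  then show ?thesis
    by (simp add: tree_cx_def)
qed

lemma cx_le:
  assumes "valid_table k T" and "0 < k"
  shows cx_A_le_D: "cx k \<psi> A T \<le> cx k \<psi> D T"
    and cx_D_le_I: "cx k \<psi> D T \<le> cx k \<psi> I T"
proof -
  have ex: "\<exists>\<Gamma>. det_tree_for k T \<Gamma> \<and> tree_cx \<psi> \<Gamma> = \<psi> (cols T)"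
    using det_tree_for_full_tree[OF assms] tree_cx_full_tree[OF assms(2)] by blast
  then show "cx k \<psi> D T \<le> cx k \<psi> I T"
    unfolding cx_def by (auto intro: Least_le)
  have "cx k \<psi> D T = (LEAST n. \<exists>\<Gamma>. det_tree_for k T \<Gamma> \<and> tree_cx \<psi> \<Gamma> = n)"
    by (simp add: cx_def)
  then have "\<exists>\<Gamma>. det_tree_for k T \<Gamma> \<and> tree_cx \<psi> \<Gamma> = cx k \<psi> D T"
    using LeastI[of "\<lambda>n. \<exists>\<Gamma>. det_tree_for k T \<Gamma> \<and> tree_cx \<psi> \<Gamma> = n", OF ex] by simp
  then obtain \<Gamma> where "det_tree_for k T \<Gamma>" "tree_cx \<psi> \<Gamma> = cx k \<psi> D T"
    by blast
  then show "cx k \<psi> A T \<le> cx k \<psi> D T"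
    unfolding cx_def det_tree_for_def by (auto intro: Least_le)
qed

lemma U_fun_eq_upper_fun: "U_fun k C \<psi> b c = upper_fun C (cx k \<psi> b) (cx k \<psi> c)"
  unfolding U_fun_def upper_fun_def setcompr_eq_image ..

lemma L_fun_eq_lower_fun: "L_fun k C \<psi> b c = lower_fun C (cx k \<psi> b) (cx k \<psi> c)"
  unfolding L_fun_def lower_fun_def setcompr_eq_image Inf_nat_def ..

lemma cx_comparable:
  assumes "\<forall>T \<in> C. valid_table k T" and "0 < k"
  shows "(\<forall>T \<in> C. cx k \<psi> b T \<le> cx k \<psi> c T) \<or> (\<forall>T \<in> C. cx k \<psi> c T \<le> cx k \<psi> b T)"
proof -
  have "\<forall>T \<in> C. cx k \<psi> A T \<le> cx k \<psi> D T" and "\<forall>T \<in> C. cx k \<psi> D T \<le> cx k \<psi> I T"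
    using assms cx_A_le_D cx_D_le_I by blast+
  then have "\<forall>T \<in> C. cx k \<psi> A T \<le> cx k \<psi> I T"
    using order_trans by blast
  with \<open>\<forall>T \<in> C. cx k \<psi> A T \<le> cx k \<psi> D T\<close> \<open>\<forall>T \<in> C. cx k \<psi> D T \<le> cx k \<psi> I T\<close>
  show ?thesis
    by (cases b; cases c) auto
qed

lemma typ_full_eq_dual_typ_u:
  assumes "\<forall>T \<in> C. valid_table k T" and "0 < k" and "C \<noteq> {}"
  shows "typ_full k C \<psi> b c = (dual_typ (typ_u k C \<psi> c b), typ_u k C \<psi> b c)"
  using typ_lower_fun_eq_dual_typ_upper_fun[OF assms(3) cx_comparable[OF assms(1,2)]]
  by (simp add: typ_full_def typ_u_def U_fun_eq_upper_fun L_fun_eq_lower_fun)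

lemma typ_u_empty: "typ_u k {} \<psi> b c = T\<epsilon>"
  unfolding typ_u_def by (intro typ_of_eqI) (simp add: has_typ_def Dom_def U_fun_def)

lemma tt_I_I_ne_eps: "tt j I I \<noteq> T\<epsilon>"
  by (simp add: tt_def mk3_def)

lemma TT_eq_dual_tt:
  assumes "j \<in> {1..7}"
  shows "TT j b c = (dual_typ (tt j c b), tt j b c)"
proof -
  have "j = 1 \<or> j = 2 \<or> j = 3 \<or> j = 4 \<or> j = 5 \<or> j = 6 \<or> j = 7"
    using assms by auto
  then show ?thesis
    by (cases b; cases c) (auto simp: TT_def tt_def mk3_def)
qed

theorem corollary3:
  fixes k :: nat and C :: "'f dtable set" and \<psi> :: "'f list \<Rightarrow> nat" and j :: nat
  assumes "2 \<le> k" and "closed_class k C" and "j \<in> {1..7}"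
  shows "typ_u k C \<psi> = tt j \<longleftrightarrow> typ_full k C \<psi> = TT j"
proof
  assume u: "typ_u k C \<psi> = tt j"
  then have "C \<noteq> {}"
    using typ_u_empty tt_I_I_ne_eps by metis
  moreover have "\<forall>T \<in> C. valid_table k T" and "0 < k"
    using assms(1,2) by (auto simp: closed_class_def)
  ultimately show "typ_full k C \<psi> = TT j"
    using u by (intro ext) (simp add: typ_full_eq_dual_typ_u TT_eq_dual_tt[OF assms(3)])
next
  assume "typ_full k C \<psi> = TT j"
  then show "typ_u k C \<psi> = tt j"
    by (intro ext) (metis typ_full_def TT_eq_dual_tt[OF assms(3)] snd_conv typ_u_def)
qed

end
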